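(* Let $I\subseteq K[x,y,z]$ be a monomial ideal and let $T=T_d(I)$ be a balanced triangular region. Then $T$ admits a lozenge tiling if and only if $T$ has no $\bigtriangledown$-heavy monomial subregion.
   Context: For $d\ge1$, $\mathcal T_d$ is an equilateral triangle of side length $d$ (horizontal bottom side) subdivided into $\binom{d+1}{2}$ upward-pointing and $\binom d2$ downward-pointing unit triangles. Upward ones are labeled by the degree $d-1$ monomials of $K[x,y,z]$, downward ones by degree $d-2$ monomials: $x^{d-1}$ at the top, $y^{d-1}$ bottom-left, $z^{d-1}$ bottom-right, and an upward triangle sharing an edge with a downward one has label equal to the downward label times a variable. A subregion is a set of unit triangles. $T_d(I)$ is the subregion of unit triangles whose labels are not in $I$. A subregion is balanced if it has equally many upward- and downward-pointing triangles and $\bigtriangledown$-heavy if it has more downward- than upward-pointing triangles. For a subregion $T$ and a monomial $m$ of degree $<d$, the monomial subregion of $T$ associated to $m$ is the set of unit triangles of $T$ whose labels are divisible by $m$ (these lie in the upward triangle of side length $d-\deg m$ associated to $m$). A lozenge is a union of two unit triangles sharing an edge; a lozenge tiling covers every unit triangle of the region exactly once (the empty region counts as tileable). *)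

theory Defs
  imports Main
begin

text \<open>Monomials x^a y^b z^c of K[x,y,z] are represented by exponent triples (a,b,c).
  A monomial ideal is determined by the set of monomials it contains, which is a set
  of exponent triples closed under multiplication by monomials.\<close>

type_synonym monom = "nat \<times> nat \<times> nat"

fun mdeg :: "monom \<Rightarrow> nat" where
  "mdeg (a, b, c) = a + b + c"

fun mdvd :: "monom \<Rightarrow> monom \<Rightarrow> bool" where
  "mdvd (a, b, c) (a', b', c') \<longleftrightarrow> a \<le> a' \<and> b \<le> b' \<and> c \<le> c'"

definition monomial_ideal :: "monom set \<Rightarrow> bool" where
  "monomial_ideal I \<longleftrightarrow> (\<forall>m m'. m \<in> I \<longrightarrow> mdvd m m' \<longrightarrow> m' \<in> I)"

text \<open>Unit triangles of T_d: upward ones labelled by degree d-1 monomials,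
  downward ones by degree d-2 monomials.\<close>

datatype tri = Up monom | Down monom

definition tri_label :: "tri \<Rightarrow> monom" where
  "tri_label t = (case t of Up m \<Rightarrow> m | Down m \<Rightarrow> m)"

definition triangle :: "nat \<Rightarrow> tri set" where
  "triangle d = {Up m | m. mdeg m + 1 = d} \<union> {Down m | m. mdeg m + 2 = d}"

definition Td :: "nat \<Rightarrow> monom set \<Rightarrow> tri set" where
  "Td d I = {t \<in> triangle d. tri_label t \<notin> I}"

definition ups :: "tri set \<Rightarrow> tri set" where
  "ups T = {t \<in> T. \<exists>m. t = Up m}"

definition downs :: "tri set \<Rightarrow> tri set" where
  "downs T = {t \<in> T. \<exists>m. t = Down m}"

definition balanced :: "tri set \<Rightarrow> bool" where
  "balanced T \<longleftrightarrow> card (ups T) = card (downs T)"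

definition down_heavy :: "tri set \<Rightarrow> bool" where
  "down_heavy T \<longleftrightarrow> card (downs T) > card (ups T)"

definition monomial_subregion :: "tri set \<Rightarrow> monom \<Rightarrow> tri set" where
  "monomial_subregion T m = {t \<in> T. mdvd m (tri_label t)}"

text \<open>Two unit triangles share an edge iff the upward label is the downward label
  times a variable.\<close>

definition unit_vec :: "nat \<Rightarrow> monom" where
  "unit_vec i = (if i = 0 then (1,0,0) else if i = 1 then (0,1,0) else (0,0,1))"

fun madd :: "monom \<Rightarrow> monom \<Rightarrow> monom" where
  "madd (a, b, c) (a', b', c') = (a + a', b + b', c + c')"

definition adjacent :: "monom \<Rightarrow> monom \<Rightarrow> bool" where
  "adjacent u w \<longleftrightarrow> (\<exists>i<3. u = madd w (unit_vec i))"

definition is_lozenge :: "tri set \<Rightarrow> bool" where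
  "is_lozenge L \<longleftrightarrow> (\<exists>u w. L = {Up u, Down w} \<and> adjacent u w)"

definition lozenge_tiling :: "tri set set \<Rightarrow> tri set \<Rightarrow> bool" where
  "lozenge_tiling P T \<longleftrightarrow>
     (\<forall>L\<in>P. is_lozenge L \<and> L \<subseteq> T) \<and>
     (\<forall>L\<in>P. \<forall>L'\<in>P. L \<noteq> L' \<longrightarrow> L \<inter> L' = {}) \<and>
     \<Union>P = T"

definition tileable :: "tri set \<Rightarrow> bool" where
  "tileable T \<longleftrightarrow> (\<exists>P. lozenge_tiling P T)"

end

theory Submission
  imports Defs
begin

(* A lozenge tiling of T = T_d(I) is a perfect matching of its downward with its upward
   triangles along shared edges. Restricted to a monomial subregion it injects the downward
   triangles into the upward ones, so no subregion is down-heavy.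

   Conversely, by Hall's theorem it suffices that every set A of downward triangles has at
   least |A| upward neighbours. A minimal violator A is connected and lies in the monomial
   subregion of the gcd m of its labels, touching all three of its sides. As that subregion
   is not down-heavy, the upward triangles there that avoid A contain a violator B of the dual
   condition; a minimal one is connected, and it touches all three sides because lowering an
   exponent of a monomial outside the ideal I stays outside I. Then A and B, together with
   their neighbours, are disjoint connected sets meeting all three sides of the subregion.
   Embedded into a triangular hex board, this contradicts the game-of-Y fact that two such
   sets must intersect. *)

section \<open>Hall's theorem and minimal deficient sets\<close>

lemma hall_condition_outside_critical:
  assumes "finite A" "\<forall>a\<in>A. finite (N a)" and hall: "\<forall>X\<subseteq>A. card X \<le> card (\<Union>(N ` X))"
    and X: "X \<subseteq> A" "card (\<Union>(N ` X)) \<le> card X"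
  shows "\<forall>Z\<subseteq>A - X. card Z \<le> card (\<Union>a\<in>Z. N a - \<Union>(N ` X))"
proof (intro allI impI)
  define M where "M = \<Union>(N ` X)"
  fix Z assume Z: "Z \<subseteq> A - X"
  have finX: "finite X" using X(1) assms(1) by (rule finite_subset)
  have finZ: "finite Z" using Z assms(1) by (rule finite_subset[OF subset_trans[OF _ Diff_subset]])
  have "finite (\<Union>a\<in>Z. N a - M)" using finZ Z assms(2) by blast
  have finM: "finite M" using finX assms(2) X(1) unfolding M_def by blast
  have cardM: "card M = card X" using X(2) hall[rule_format, OF X(1)] unfolding M_def by simp
  have "Z \<union> X \<subseteq> A" using Z X(1) by blast
  have "card Z + card X = card (Z \<union> X)"
    using Z finZ finX by (subst card_Un_disjoint) auto
  also have "\<dots> \<le> card (\<Union>(N ` (Z \<union> X)))" using hall[rule_format, OF \<open>Z \<union> X \<subseteq> A\<close>] .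
  also have "\<Union>(N ` (Z \<union> X)) = (\<Union>a\<in>Z. N a - M) \<union> M" by (auto simp: M_def)
  also have "card \<dots> = card (\<Union>a\<in>Z. N a - M) + card X"
    using \<open>finite (\<Union>a\<in>Z. N a - M)\<close> finM cardM by (subst card_Un_disjoint) auto
  finally show "card Z \<le> card (\<Union>a\<in>Z. N a - M)" by simp
qed

lemma hall_condition_remove_edge:
  assumes strict: "\<forall>X\<subseteq>A. X \<noteq> {} \<longrightarrow> X \<noteq> A \<longrightarrow> card X < card (\<Union>(N ` X))" and "a \<in> A"
  shows "\<forall>Z\<subseteq>A - {a}. card Z \<le> card (\<Union>x\<in>Z. N x - {b})"
proof (intro allI impI)
  fix Z assume Z: "Z \<subseteq> A - {a}"
  show "card Z \<le> card (\<Union>x\<in>Z. N x - {b})"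
  proof (cases "Z = {}")
    case False
    then have "card Z < card (\<Union>(N ` Z))" using strict Z \<open>a \<in> A\<close> by blast
    moreover have "(\<Union>x\<in>Z. N x - {b}) = \<Union>(N ` Z) - {b}" by auto
    moreover have "card (\<Union>(N ` Z)) - 1 \<le> card (\<Union>(N ` Z) - {b})"
      using diff_card_le_card_Diff[of "{b}" "\<Union>(N ` Z)"] by simp
    ultimately show ?thesis by simp
  qed simp
qed

lemma matching_glue_critical:
  assumes "X \<subseteq> A" "inj_on g X" "\<forall>a\<in>X. g a \<in> N a"
    and "inj_on h (A - X)" "\<forall>a\<in>A - X. h a \<in> N a - \<Union>(N ` X)"
  shows "\<exists>f. inj_on f A \<and> (\<forall>a\<in>A. f a \<in> N a)"
proof -
  define f where "f a = (if a \<in> X then g a else h a)" for a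
  have "g ` X \<subseteq> \<Union>(N ` X)" "h ` (A - X) \<inter> \<Union>(N ` X) = {}" using assms(3,5) by blast+
  then have "g ` X \<inter> h ` (A - X) = {}" by blast
  then have "inj_on f (X \<union> (A - X))" unfolding f_def by (rule inj_on_disjoint_Un[OF assms(2,4)])
  moreover have "X \<union> (A - X) = A" using assms(1) by blast
  moreover have "\<forall>a\<in>A. f a \<in> N a" using assms(3,5) unfolding f_def by simp
  ultimately show ?thesis by metis
qed

lemma matching_extend_edge:
  assumes "a \<in> A" "b \<in> N a" "inj_on f (A - {a})" "\<forall>x\<in>A - {a}. f x \<in> N x - {b}"
  shows "\<exists>f. inj_on f A \<and> (\<forall>x\<in>A. f x \<in> N x)"
proof -
  have "inj_on (f(a := b)) A" using assms(3,4) by (auto simp: inj_on_def)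
  moreover have "\<forall>x\<in>A. (f(a := b)) x \<in> N x" using assms by auto
  ultimately show ?thesis by blast
qed

lemma hall_marriage:
  fixes A :: "'a set" and N :: "'a \<Rightarrow> 'b set"
  assumes "finite A" and "\<forall>a\<in>A. finite (N a)"
    and "\<forall>X\<subseteq>A. card X \<le> card (\<Union>(N ` X))"
  shows "\<exists>f. inj_on f A \<and> (\<forall>a\<in>A. f a \<in> N a)"
  using assms
proof (induction "card A" arbitrary: A N rule: less_induct)
  case less
  note finA = less.prems(1) and finN = less.prems(2) and hall = less.prems(3)
  show ?case
  proof (cases "\<exists>X. X \<subseteq> A \<and> X \<noteq> {} \<and> X \<noteq> A \<and> card (\<Union>(N ` X)) \<le> card X")
    case True
    \<comment> \<open>A critical subset X: match X inside its own neighbourhood and A - X outside of it.\<close>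
    then obtain X where X: "X \<subseteq> A" "X \<noteq> {}" "X \<noteq> A" "card (\<Union>(N ` X)) \<le> card X" by blast
    have finX: "finite X" using X(1) finA finite_subset by auto
    have "card X < card A" using X finA by (meson psubsetI psubset_card_mono)
    moreover have "\<forall>a\<in>X. finite (N a)" "\<forall>Y\<subseteq>X. card Y \<le> card (\<Union>(N ` Y))"
      using X(1) finN hall by auto
    ultimately obtain g where g: "inj_on g X" "\<forall>a\<in>X. g a \<in> N a"
      using less.hyps[OF _ finX] by blast
    have "card (A - X) < card A" by (rule psubset_card_mono[OF finA]) (use X in blast)
    moreover have "\<forall>a\<in>A - X. finite (N a - \<Union>(N ` X))" using finN by blast
    ultimately obtain h where "inj_on h (A - X)" "\<forall>a\<in>A - X. h a \<in> N a - \<Union>(N ` X)"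
      using less.hyps[OF _ finite_Diff[OF finA] _ hall_condition_outside_critical[OF finA finN hall X(1,4)]]
      by blast
    then show ?thesis by (rule matching_glue_critical[OF X(1) g])
  next
    case False
    \<comment> \<open>No critical subset: any edge a--b can be used, as removing b keeps Hall's condition.\<close>
    show ?thesis
    proof (cases "A = {}")
      case False
      then obtain a where a: "a \<in> A" by auto
      have "card {a} \<le> card (N a)" using hall[rule_format, of "{a}"] a by simp
      then obtain b where b: "b \<in> N a" by fastforce
      have "\<forall>X\<subseteq>A. X \<noteq> {} \<longrightarrow> X \<noteq> A \<longrightarrow> card X < card (\<Union>(N ` X))"
      proof (intro allI impI)
        fix X assume "X \<subseteq> A" "X \<noteq> {}" "X \<noteq> A"
        then show "card X < card (\<Union>(N ` X))" using \<open>\<not> (\<exists>X. _)\<close> by (meson not_le)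
      qed
      note hall_rest = hall_condition_remove_edge[OF this a, of b]
      have "\<forall>x\<in>A - {a}. finite (N x - {b})" using finN by blast
      then obtain f where "inj_on f (A - {a})" "\<forall>x\<in>A - {a}. f x \<in> N x - {b}"
        using less.hyps[OF card_Diff1_less[OF finA a] finite_Diff[OF finA] _ hall_rest] by blast
      then show ?thesis by (rule matching_extend_edge[of a A b N, OF a b])
    qed simp
  qed
qed

lemma exists_minimal_deficient_subset:
  fixes N :: "'a \<Rightarrow> 'b set"
  assumes "finite X0" and "card (\<Union>(N ` X0)) < card X0"
  obtains X where "X \<subseteq> X0" "card (\<Union>(N ` X)) < card X"
    "\<forall>X'. X' \<subset> X \<longrightarrow> card X' \<le> card (\<Union>(N ` X'))"
  using assms
proof (induction "card X0" arbitrary: X0 rule: less_induct)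
  case less
  show ?case
  proof (cases "\<exists>X'. X' \<subset> X0 \<and> card (\<Union>(N ` X')) < card X'")
    case True
    then obtain X' where X': "X' \<subset> X0" "card (\<Union>(N ` X')) < card X'" by blast
    have "card X' < card X0" using X'(1) less.prems(2) by (rule psubset_card_mono[rotated])
    then show ?thesis
    proof (rule less.hyps)
      fix X assume X: "X \<subseteq> X'" "card (\<Union>(N ` X)) < card X"
        "\<forall>X''. X'' \<subset> X \<longrightarrow> card X'' \<le> card (\<Union>(N ` X''))"
      show thesis using less.prems(1)[OF _ X(2,3)] X(1) X'(1) by blast
    next
      show "finite X'" using X'(1) less.prems(2) finite_subset by blast
    qed (rule X'(2))
  next
    case False
    show ?thesis
      by (rule less.prems(1)[of X0]) (use False less.prems(3) in \<open>auto simp: not_less\<close>)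
  qed
qed

definition connected_in :: "('a \<Rightarrow> 'a \<Rightarrow> bool) \<Rightarrow> 'a set \<Rightarrow> bool" where
  "connected_in E A \<longleftrightarrow> (\<forall>a\<in>A. \<forall>b\<in>A. (\<lambda>x y. x \<in> A \<and> y \<in> A \<and> E x y)\<^sup>*\<^sup>* a b)"

lemma connected_in_from_base:
  assumes "symp E" and "\<forall>b\<in>A. (\<lambda>x y. x \<in> A \<and> y \<in> A \<and> E x y)\<^sup>*\<^sup>* a b"
  shows "connected_in E A"
proof -
  have "symp (\<lambda>x y. x \<in> A \<and> y \<in> A \<and> E x y)"
    using assms(1) by (auto simp: symp_def)
  then show ?thesis
    using assms(2) unfolding connected_in_def by (meson rtranclp_trans sympD symp_rtranclp)
qed

lemma connected_in_mono:
  assumes "connected_in R A" and "\<And>x y. x \<in> A \<Longrightarrow> y \<in> A \<Longrightarrow> R x y \<Longrightarrow> R' x y"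
  shows "connected_in R' A"
  unfolding connected_in_def
proof (intro ballI)
  fix a b assume "a \<in> A" "b \<in> A"
  then have "(\<lambda>x y. x \<in> A \<and> y \<in> A \<and> R x y)\<^sup>*\<^sup>* a b"
    using assms(1) unfolding connected_in_def by blast
  then show "(\<lambda>x y. x \<in> A \<and> y \<in> A \<and> R' x y)\<^sup>*\<^sup>* a b"
    by (induction rule: rtranclp_induct) (auto intro: rtranclp.rtrancl_into_rtrancl assms(2))
qed

lemma connected_in_with_neighbours:
  assumes "symp E" and conn: "connected_in (\<lambda>a b. \<exists>c\<in>B. E a c \<and> E b c) A" and "A \<noteq> {}"
  shows "connected_in E (A \<union> {c\<in>B. \<exists>a\<in>A. E a c})"
proof -
  define C where "C = A \<union> {c\<in>B. \<exists>a\<in>A. E a c}"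
  define R where "R = (\<lambda>x y. x \<in> C \<and> y \<in> C \<and> E x y)"
  obtain a0 where a0: "a0 \<in> A" using \<open>A \<noteq> {}\<close> by blast
  have path_A: "R\<^sup>*\<^sup>* a0 a" if "a \<in> A" for a
  proof -
    have "(\<lambda>x y. x \<in> A \<and> y \<in> A \<and> (\<exists>c\<in>B. E x c \<and> E y c))\<^sup>*\<^sup>* a0 a"
      using conn a0 that unfolding connected_in_def by blast
    then show ?thesis
    proof (induction rule: rtranclp_induct)
      case (step x y)
      then obtain c where "c \<in> B" "E x c" "E y c" "x \<in> A" "y \<in> A" by blast
      then have "R x c" "R c y" using \<open>symp E\<close> unfolding R_def C_def by (auto dest: sympD)
      then show ?case using step.IH by (meson rtranclp.rtrancl_into_rtrancl)
    qed simp
  qed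
  have "R\<^sup>*\<^sup>* a0 c" if c: "c \<in> C" for c
  proof (cases "c \<in> A")
    case False
    then obtain a where "a \<in> A" "E a c" using c unfolding C_def by blast
    then have "R a c" using c unfolding R_def C_def by blast
    then show ?thesis using path_A[OF \<open>a \<in> A\<close>] by (meson rtranclp.rtrancl_into_rtrancl)
  qed (use path_A in blast)
  then show ?thesis
    using connected_in_from_base[OF \<open>symp E\<close>] unfolding R_def C_def by blast
qed

lemma minimal_deficient_connected:
  fixes N :: "'a \<Rightarrow> 'b set"
  assumes finS: "finite S" and finN: "\<forall>x\<in>S. finite (N x)"
    and deficient: "card (\<Union>(N ` S)) < card S"
    and minimal: "\<forall>S'. S' \<subset> S \<longrightarrow> card S' \<le> card (\<Union>(N ` S'))"
  shows "connected_in (\<lambda>x y. N x \<inter> N y \<noteq> {}) S"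
  unfolding connected_in_def
proof (intro ballI, rule ccontr)
  fix a b assume a: "a \<in> S" and b: "b \<in> S"
  define R where "R = (\<lambda>x y. x \<in> S \<and> y \<in> S \<and> N x \<inter> N y \<noteq> {})"
  assume "\<not> R\<^sup>*\<^sup>* a b"
  \<comment> \<open>The component C of a and its complement have disjoint neighbourhoods, so one is deficient.\<close>
  define C where "C = {x \<in> S. R\<^sup>*\<^sup>* a x}"
  have CS: "C \<subset> S" and DS: "S - C \<subset> S"
    using a b \<open>\<not> R\<^sup>*\<^sup>* a b\<close> unfolding C_def by auto
  have disj: "\<Union>(N ` C) \<inter> \<Union>(N ` (S - C)) = {}"
  proof (rule ccontr)
    assume "\<Union>(N ` C) \<inter> \<Union>(N ` (S - C)) \<noteq> {}"
    then obtain x y where "x \<in> C" "y \<in> S - C" "N x \<inter> N y \<noteq> {}" by blast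
    then show False unfolding C_def R_def by (auto intro: rtranclp.rtrancl_into_rtrancl)
  qed
  have finC: "finite C" using finS CS finite_subset by auto
  have "card S = card C + card (S - C)"
    using CS finS by (metis card_Diff_subset finite_subset le_add_diff_inverse psubset_imp_subset card_mono)
  also have "\<dots> \<le> card (\<Union>(N ` C)) + card (\<Union>(N ` (S - C)))"
    using minimal CS DS by (simp add: add_mono)
  also have "\<dots> = card (\<Union>(N ` C) \<union> \<Union>(N ` (S - C)))"
    using disj finN finC finS CS by (subst card_Un_disjoint) auto
  also have "\<Union>(N ` C) \<union> \<Union>(N ` (S - C)) = \<Union>(N ` S)" using CS by blast
  finally show False using deficient by linarith
qed

definition neighbours :: "('a \<Rightarrow> 'a \<Rightarrow> bool) \<Rightarrow> 'a set \<Rightarrow> 'a \<Rightarrow> 'a set" where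
  "neighbours E T x = {y \<in> T. E x y}"

lemma finite_neighbours: "finite T \<Longrightarrow> finite (neighbours E T x)"
  unfolding neighbours_def by simp

lemma connected_closure_of_minimal_deficient:
  assumes "symp E" and "finite X" and "\<forall>x\<in>X. finite (neighbours E T x)"
    and deficient: "card (\<Union>(neighbours E T ` X)) < card X"
    and minimal: "\<forall>X'. X' \<subset> X \<longrightarrow> card X' \<le> card (\<Union>(neighbours E T ` X'))"
    and "\<forall>x\<in>X. neighbours E T x \<subseteq> S"
  shows "connected_in E (X \<union> {c\<in>S. \<exists>x\<in>X. E x c})"
proof (rule connected_in_with_neighbours[OF \<open>symp E\<close>])
  show "connected_in (\<lambda>a b. \<exists>c\<in>S. E a c \<and> E b c) X"
  proof (rule connected_in_mono[OF minimal_deficient_connected[OF assms(2-5)]])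
    fix x y assume "x \<in> X" "neighbours E T x \<inter> neighbours E T y \<noteq> {}"
    then show "\<exists>c\<in>S. E x c \<and> E y c" using assms(6) unfolding neighbours_def by blast
  qed
  show "X \<noteq> {}" using deficient by auto
qed

lemma card_deficient_complement:
  assumes "finite U" "finite D" "A \<subseteq> D" "NA \<subseteq> U" "card NA < card A" "card D \<le> card U"
    and "NB \<subseteq> D - A"
  shows "card NB < card (U - NA)"
proof -
  have "card NB \<le> card D - card A"
    using card_mono[OF _ assms(7)] assms(2,3) by (simp add: card_Diff_subset finite_subset)
  moreover have "card A \<le> card D" using assms(2,3) by (rule card_mono)
  moreover have "card (U - NA) = card U - card NA"
    using assms(1,4) by (simp add: card_Diff_subset finite_subset)
  ultimately show ?thesis using assms(5,6) by linarith
qed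

section \<open>The game of Y\<close>

definition board :: "nat \<Rightarrow> (nat \<times> nat) set" where
  "board n = {p. fst p + snd p < n}"

definition hex_adj :: "nat \<times> nat \<Rightarrow> nat \<times> nat \<Rightarrow> bool" where
  "hex_adj p q \<longleftrightarrow>
     (fst q = Suc (fst p) \<and> snd q = snd p) \<or> (fst p = Suc (fst q) \<and> snd p = snd q) \<or>
     (fst q = fst p \<and> snd q = Suc (snd p)) \<or> (fst q = fst p \<and> snd p = Suc (snd q)) \<or>
     (fst q = Suc (fst p) \<and> snd p = Suc (snd q)) \<or> (fst p = Suc (fst q) \<and> snd q = Suc (snd p))"

definition spans_sides :: "nat \<Rightarrow> (nat \<times> nat) set \<Rightarrow> bool" where
  "spans_sides n X \<longleftrightarrow> X \<subseteq> board n \<and> connected_in hex_adj X \<and>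
     (\<exists>a\<in>X. fst a = 0) \<and> (\<exists>a\<in>X. snd a = 0) \<and> (\<exists>a\<in>X. fst a + snd a + 1 = n)"

definition cell_triangle :: "nat \<times> nat \<Rightarrow> (nat \<times> nat) set" where
  "cell_triangle t = {t, (Suc (fst t), snd t), (fst t, Suc (snd t))}"

(* The reduction step of the game of Y: a small triangle t of board n is assigned to X when
   at least two of its three cells in board (n + 1) lie in X. This keeps a set connected and
   touching all three sides, and keeps disjoint sets disjoint. *)
definition majority :: "nat \<Rightarrow> (nat \<times> nat) set \<Rightarrow> (nat \<times> nat) set" where
  "majority n X = {t \<in> board n. \<exists>a b. a \<noteq> b \<and> a \<in> X \<and> b \<in> X \<and> a \<in> cell_triangle t \<and> b \<in> cell_triangle t}"

lemma symp_hex_adj: "symp hex_adj"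
  unfolding symp_def hex_adj_def by auto

lemma hex_adj_neq: "hex_adj a b \<Longrightarrow> a \<noteq> b"
  unfolding hex_adj_def by auto

lemma hex_adj_in_cell_triangle:
  assumes "hex_adj a b" "a \<in> board (Suc n)" "b \<in> board (Suc n)"
  shows "\<exists>t\<in>board n. a \<in> cell_triangle t \<and> b \<in> cell_triangle t"
proof -
  obtain i j k l where ab: "a = (i, j)" "b = (k, l)" by (cases a, cases b)
  show ?thesis
    using assms unfolding ab
    by (intro bexI[of _ "(min i k, min j l)"]) (auto simp: hex_adj_def cell_triangle_def board_def)
qed

lemma cell_triangles_overlap:
  assumes "a \<in> cell_triangle t" "a \<in> cell_triangle t'"
  shows "t = t' \<or> hex_adj t t'"
  using assms unfolding cell_triangle_def hex_adj_def by (cases t, cases t') auto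

lemma cell_triangle_bounds:
  assumes "a \<in> cell_triangle t"
  shows "fst t \<le> fst a" "snd t \<le> snd a" "fst a + snd a \<le> Suc (fst t + snd t)"
  using assms unfolding cell_triangle_def by auto

lemma majority_disjoint: "X \<inter> Z = {} \<Longrightarrow> majority n X \<inter> majority n Z = {}"
  unfolding majority_def cell_triangle_def by auto

lemma connected_majority:
  assumes "X \<subseteq> board (Suc n)" and conn: "connected_in hex_adj X"
  shows "connected_in hex_adj (majority n X)"
  unfolding connected_in_def
proof (intro ballI)
  define R where "R = (\<lambda>s t. s \<in> majority n X \<and> t \<in> majority n X \<and> hex_adj s t)"
  fix t1 t2 assume t1: "t1 \<in> majority n X" and t2: "t2 \<in> majority n X"
  obtain a1 where a1: "a1 \<in> X" "a1 \<in> cell_triangle t1" using t1 unfolding majority_def by auto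
  obtain a2 where a2: "a2 \<in> X" "a2 \<in> cell_triangle t2" using t2 unfolding majority_def by auto
  have "(\<lambda>x y. x \<in> X \<and> y \<in> X \<and> hex_adj x y)\<^sup>*\<^sup>* a1 a2"
    using conn a1 a2 unfolding connected_in_def by auto
  \<comment> \<open>Follow the path in X; consecutive cells share a majority triangle or lie in adjacent ones.\<close>
  then have "\<forall>t\<in>majority n X. a2 \<in> cell_triangle t \<longrightarrow> R\<^sup>*\<^sup>* t1 t"
  proof (induction rule: rtranclp_induct)
    case base
    show ?case using cell_triangles_overlap[OF a1(2)] t1 unfolding R_def by auto
  next
    case (step a a')
    then have aa': "a \<in> X" "a' \<in> X" "hex_adj a a'" by auto
    then obtain t0 where t0: "t0 \<in> board n" "a \<in> cell_triangle t0" "a' \<in> cell_triangle t0"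
      using hex_adj_in_cell_triangle \<open>X \<subseteq> board (Suc n)\<close> by blast
    have "t0 \<in> majority n X"
      unfolding majority_def using t0 aa' hex_adj_neq by blast
    then have "R\<^sup>*\<^sup>* t1 t0" using step.IH t0(2) by blast
    then show ?case
      using cell_triangles_overlap[OF t0(3)] \<open>t0 \<in> majority n X\<close> unfolding R_def
      by (auto intro: rtranclp.rtrancl_into_rtrancl)
  qed
  then show "R\<^sup>*\<^sup>* t1 t2" using t2 a2 by blast
qed

lemma in_majority_triangle:
  assumes "X \<subseteq> board (Suc n)" and "connected_in hex_adj X" and "a \<in> X" "b \<in> X" "a \<noteq> b"
  shows "\<exists>t\<in>majority n X. a \<in> cell_triangle t"
proof -
  have "(\<lambda>x y. x \<in> X \<and> y \<in> X \<and> hex_adj x y)\<^sup>*\<^sup>* a b"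
    using assms(2-4) unfolding connected_in_def by blast
  then obtain c where "c \<in> X" "hex_adj a c"
    using \<open>a \<noteq> b\<close> by (induction rule: converse_rtranclp_induct) auto
  then obtain t where "t \<in> board n" "a \<in> cell_triangle t" "c \<in> cell_triangle t"
    using hex_adj_in_cell_triangle assms(1,3) by blast
  then show ?thesis
    unfolding majority_def using \<open>c \<in> X\<close> hex_adj_neq[OF \<open>hex_adj a c\<close>] assms(3) by blast
qed

lemma spans_sides_majority:
  assumes span: "spans_sides (Suc n) X" and "n \<ge> 1"
  shows "spans_sides n (majority n X)"
proof -
  have X: "X \<subseteq> board (Suc n)" "connected_in hex_adj X" using span by (auto simp: spans_sides_def)
  obtain a0 b0 c0 where abc: "a0 \<in> X" "fst a0 = 0" "b0 \<in> X" "snd b0 = 0"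
    "c0 \<in> X" "fst c0 + snd c0 = n"
    using span by (auto simp: spans_sides_def)
  have covered: "\<exists>t\<in>majority n X. a \<in> cell_triangle t" if "a \<in> X" for a
  proof -
    have "\<exists>b\<in>X. b \<noteq> a" using abc \<open>n \<ge> 1\<close> by (metis add_is_0 not_one_le_zero)
    then show ?thesis using in_majority_triangle[OF X] \<open>a \<in> X\<close> by metis
  qed
  obtain ta tb tc where t: "ta \<in> majority n X" "a0 \<in> cell_triangle ta"
    "tb \<in> majority n X" "b0 \<in> cell_triangle tb" "tc \<in> majority n X" "c0 \<in> cell_triangle tc"
    using covered abc by meson
  have board: "majority n X \<subseteq> board n" unfolding majority_def by auto
  have "fst ta = 0" using cell_triangle_bounds(1)[OF t(2)] abc(2) by simp
  moreover have "snd tb = 0" using cell_triangle_bounds(2)[OF t(4)] abc(4) by simp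
  moreover have "fst tc + snd tc + 1 = n"
    using cell_triangle_bounds(3)[OF t(6)] abc(6) board t(5) by (auto simp: board_def)
  ultimately show ?thesis
    unfolding spans_sides_def using connected_majority[OF X] board t(1,3,5) by (intro conjI bexI)
qed

theorem spanning_sets_intersect:
  assumes "spans_sides n X" and "spans_sides n Z"
  shows "X \<inter> Z \<noteq> {}"
  using assms
proof (induction n arbitrary: X Z)
  case 0
  then show ?case by (auto simp: spans_sides_def board_def)
next
  case (Suc n)
  show ?case
  proof (cases "n = 0")
    case True
    then have "board (Suc n) = {(0, 0)}" by (auto simp: board_def)
    then show ?thesis using Suc.prems by (auto simp: spans_sides_def)
  next
    case False
    then have "majority n X \<inter> majority n Z \<noteq> {}"
      using Suc.IH spans_sides_majority Suc.prems by simp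
    then show ?thesis using majority_disjoint by blast
  qed
qed

section \<open>Monomials\<close>

(* Exponent of x, y, z for i = 0, 1, 2, matching unit_vec (larger i also select z). *)
definition coord :: "nat \<Rightarrow> monom \<Rightarrow> nat" where
  "coord i m = (case m of (a, b, c) \<Rightarrow> if i = 0 then a else if i = 1 then b else c)"

lemma coord_simps [simp]:
  "coord 0 (a, b, c) = a" "coord 1 (a, b, c) = b" "coord (Suc 0) (a, b, c) = b" "coord 2 (a, b, c) = c"
  by (simp_all add: coord_def)

lemma mdvd_iff_coord:
  "mdvd m w \<longleftrightarrow> coord 0 m \<le> coord 0 w \<and> coord 1 m \<le> coord 1 w \<and> coord 2 m \<le> coord 2 w"
  by (cases m; cases w) simp

lemma mdvd_coord_le: "mdvd m u \<Longrightarrow> coord i m \<le> coord i u"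
  by (cases m; cases u) (simp add: coord_def)

lemma mdvd_trans: "mdvd a b \<Longrightarrow> mdvd b c \<Longrightarrow> mdvd a c"
  by (cases a; cases b; cases c) simp

lemma mdeg_le_if_mdvd: "mdvd m w \<Longrightarrow> mdeg m \<le> mdeg w"
  by (cases m; cases w) simp

lemma monomial_ideal_mdvd_closed: "monomial_ideal I \<Longrightarrow> u \<notin> I \<Longrightarrow> mdvd w u \<Longrightarrow> w \<notin> I"
  unfolding monomial_ideal_def by blast

lemma adjacent_cases:
  "adjacent u w \<longleftrightarrow> u = madd w (unit_vec 0) \<or> u = madd w (unit_vec 1) \<or> u = madd w (unit_vec 2)"
  unfolding adjacent_def numeral_3_eq_3 Ex_less_Suc numeral_2_eq_2 One_nat_def by auto

lemma adjacent_mdeg_mdvd: "adjacent u w \<Longrightarrow> mdeg u = Suc (mdeg w) \<and> mdvd w u"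
  by (cases w) (auto simp: adjacent_cases unit_vec_def)

lemma coord_madd_other_unit_vec: "coord i (madd w (unit_vec (if i = 0 then 1 else 0))) = coord i w"
  by (cases w) (simp add: unit_vec_def coord_def)

definition mgcd :: "monom set \<Rightarrow> monom" where
  "mgcd W = (Min (coord 0 ` W), Min (coord 1 ` W), Min (coord 2 ` W))"

lemma coord_mgcd: "coord i (mgcd W) = Min (coord i ` W)"
  by (cases "i = 0"; cases "i = 1") (simp_all add: mgcd_def coord_def)

lemma mgcd_mdvd: "finite W \<Longrightarrow> w \<in> W \<Longrightarrow> mdvd (mgcd W) w"
  unfolding mdvd_iff_coord by (simp add: coord_mgcd)

lemma mgcd_attained:
  assumes "finite W" "W \<noteq> {}"
  shows "\<exists>w\<in>W. coord i w = coord i (mgcd W)"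
proof -
  have "Min (coord i ` W) \<in> coord i ` W" using assms by (intro Min_in) auto
  then show ?thesis using coord_mgcd by force
qed

definition mlower :: "nat \<Rightarrow> monom \<Rightarrow> monom" where
  "mlower i u = (case u of (a, b, c) \<Rightarrow>
     if i = 0 then (a - 1, b, c) else if i = 1 then (a, b - 1, c) else (a, b, c - 1))"

lemma mlower_properties:
  assumes "coord i m < coord i u" "mdvd m u"
  shows "adjacent u (mlower i u)" "mdvd (mlower i u) u" "mdvd m (mlower i u)"
    "mdeg (mlower i u) + 1 = mdeg u"
  using assms
  by (cases m; cases u; auto simp: mlower_def adjacent_cases unit_vec_def coord_def)+

lemma mlower_inj: "coord i m < coord i u \<Longrightarrow> coord i m < coord i u' \<Longrightarrow> mlower i u = mlower i u' \<Longrightarrow> u = u'"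
  by (cases u; cases u') (auto simp: mlower_def coord_def split: if_splits)

section \<open>Triangles, lozenges and tilings\<close>

definition tri_edge :: "tri \<Rightarrow> tri \<Rightarrow> bool" where
  "tri_edge s t \<longleftrightarrow> (\<exists>u w. adjacent u w \<and> (s = Up u \<and> t = Down w \<or> s = Down w \<and> t = Up u))"

lemma symp_tri_edge: "symp tri_edge"
  unfolding symp_def tri_edge_def by blast

lemma tri_label_simps [simp]: "tri_label (Up u) = u" "tri_label (Down w) = w"
  by (simp_all add: tri_label_def)

lemma Up_in_ups [simp]: "Up u \<in> ups T \<longleftrightarrow> Up u \<in> T"
  unfolding ups_def by blast

lemma Down_in_downs [simp]: "Down w \<in> downs T \<longleftrightarrow> Down w \<in> T"
  unfolding downs_def by blast

lemma in_monomial_subregion: "t \<in> monomial_subregion T m \<longleftrightarrow> t \<in> T \<and> mdvd m (tri_label t)"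
  unfolding monomial_subregion_def by blast

lemma tri_edge_Down: "tri_edge (Down w) s \<longleftrightarrow> (\<exists>u. s = Up u \<and> adjacent u w)"
  unfolding tri_edge_def by blast

lemma tri_edge_Up: "tri_edge (Up u) s \<longleftrightarrow> (\<exists>w. s = Down w \<and> adjacent u w)"
  unfolding tri_edge_def by blast

lemma neighbours_of_down: "t \<in> downs T \<Longrightarrow> s \<in> neighbours tri_edge T t \<Longrightarrow> s \<in> ups T \<and> tri_edge t s"
  unfolding downs_def ups_def neighbours_def tri_edge_def by blast

lemma is_lozenge_iff: "is_lozenge L \<longleftrightarrow> (\<exists>w s. L = {s, Down w} \<and> tri_edge (Down w) s)"
  unfolding is_lozenge_def tri_edge_Down by blast

lemma finite_triangle: "finite (triangle d)"
proof -
  have "{m. mdeg m + k = d} \<subseteq> {..d} \<times> {..d} \<times> {..d}" for k by auto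
  then have "finite {m. mdeg m + k = d}" for k by (rule finite_subset) auto
  moreover have "triangle d = Up ` {m. mdeg m + 1 = d} \<union> Down ` {m. mdeg m + 2 = d}"
    unfolding triangle_def by blast
  ultimately show ?thesis by (metis finite_Un finite_imageI)
qed

lemma Td_subset_triangle: "Td d I \<subseteq> triangle d"
  unfolding Td_def by blast

lemma monomial_subregion_mono: "T \<subseteq> T' \<Longrightarrow> monomial_subregion T m \<subseteq> monomial_subregion T' m"
  unfolding monomial_subregion_def by blast

lemma Up_in_triangle_subregion:
  "Up u \<in> monomial_subregion (triangle d) m \<longleftrightarrow> mdeg u + 1 = d \<and> mdvd m u"
  by (cases u) (auto simp: monomial_subregion_def triangle_def tri_label_def)

lemma Down_in_triangle_subregion:
  "Down w \<in> monomial_subregion (triangle d) m \<longleftrightarrow> mdeg w + 2 = d \<and> mdvd m w"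
  by (cases w) (auto simp: monomial_subregion_def triangle_def tri_label_def)

lemma Up_in_subregion_Td:
  "Up u \<in> monomial_subregion (Td d I) m \<longleftrightarrow> mdeg u + 1 = d \<and> u \<notin> I \<and> mdvd m u"
  by (cases u) (auto simp: monomial_subregion_def Td_def triangle_def tri_label_def)

lemma Down_in_subregion_Td:
  "Down w \<in> monomial_subregion (Td d I) m \<longleftrightarrow> mdeg w + 2 = d \<and> w \<notin> I \<and> mdvd m w"
  by (cases w) (auto simp: monomial_subregion_def Td_def triangle_def tri_label_def)

lemma finite_Td_subregion: "finite (monomial_subregion (Td d I) m)"
  using finite_triangle by (rule finite_subset[rotated]) (auto simp: monomial_subregion_def Td_def)

lemma ups_Un_downs: "T = ups T \<union> downs T"
  unfolding ups_def downs_def using tri.exhaust by blast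

lemma tiling_partner:
  assumes tiling: "lozenge_tiling P T" and "Down w \<in> T"
  obtains u where "{Up u, Down w} \<in> P" "adjacent u w"
proof -
  have "\<Union>P = T" and lozenges: "\<forall>L\<in>P. is_lozenge L" using tiling unfolding lozenge_tiling_def by blast+
  then obtain L where L: "L \<in> P" "Down w \<in> L" using assms(2) by blast
  then have "is_lozenge L" using lozenges by blast
  then obtain u w' where uw: "L = {Up u, Down w'}" "adjacent u w'" unfolding is_lozenge_def by blast
  then have "w' = w" using L(2) by simp
  then show ?thesis using that L(1) uw by blast
qed

lemma tiling_not_down_heavy:
  assumes "finite T" and tiling: "lozenge_tiling P T"
  shows "\<not> down_heavy (monomial_subregion T m)"
proof -
  define S where "S = monomial_subregion T m"
  define partner where "partner w = (SOME u. {Up u, Down w} \<in> P \<and> adjacent u w)" for w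
  have partner: "{Up (partner w), Down w} \<in> P \<and> adjacent (partner w) w" if "Down w \<in> T" for w
    unfolding partner_def by (rule someI_ex) (use tiling_partner[OF tiling that] in blast)
  define f where "f t = Up (partner (tri_label t))" for t
  have disjoint: "\<forall>L\<in>P. \<forall>L'\<in>P. L \<noteq> L' \<longrightarrow> L \<inter> L' = {}" and "\<forall>L\<in>P. L \<subseteq> T"
    using tiling unfolding lozenge_tiling_def by blast+
  have down: "\<exists>w. t = Down w \<and> Down w \<in> T \<and> mdvd m w" if t: "t \<in> downs S" for t
  proof -
    obtain w where "t = Down w" "t \<in> T" "mdvd m (tri_label t)"
      using t unfolding downs_def S_def monomial_subregion_def by blast
    then show ?thesis by (intro exI[of _ w]) (simp add: tri_label_def)
  qed
  have "inj_on f (downs S)"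
  proof (rule inj_onI)
    fix t t' assume t: "t \<in> downs S" "t' \<in> downs S" "f t = f t'"
    obtain w w' where w: "t = Down w" "t' = Down w'" "Down w \<in> T" "Down w' \<in> T"
      using down[OF t(1)] down[OF t(2)] by blast
    then have "partner w = partner w'" using t(3) unfolding f_def tri_label_def by simp
    then have "Up (partner w) \<in> {Up (partner w), Down w} \<inter> {Up (partner w'), Down w'}" by simp
    then have "{Up (partner w), Down w} = {Up (partner w'), Down w'}"
      using disjoint partner[OF w(3)] partner[OF w(4)] by (metis empty_iff)
    then show "t = t'" using w(1,2) by (simp add: doubleton_eq_iff)
  qed
  moreover have "f ` downs S \<subseteq> ups S"
  proof (rule image_subsetI)
    fix t assume t: "t \<in> downs S"
    obtain w where w: "t = Down w" "Down w \<in> T" "mdvd m w" using down[OF t] by blast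
    have "Up (partner w) \<in> T" using partner[OF w(2)] \<open>\<forall>L\<in>P. L \<subseteq> T\<close> by blast
    moreover have "mdvd m (partner w)"
      using mdvd_trans[OF w(3)] adjacent_mdeg_mdvd partner[OF w(2)] by blast
    ultimately show "f t \<in> ups S"
      using w(1) by (simp add: f_def S_def in_monomial_subregion)
  qed
  moreover have "finite (ups S)" using \<open>finite T\<close> unfolding ups_def S_def monomial_subregion_def by simp
  ultimately have "card (downs S) \<le> card (ups S)" by (rule card_inj_on_le)
  then show ?thesis unfolding down_heavy_def S_def by simp
qed

lemma tileable_if_matching:
  assumes "finite T" and "card (ups T) = card (downs T)"
    and f: "inj_on f (downs T)" "\<forall>t\<in>downs T. f t \<in> ups T \<and> tri_edge t (f t)"
  shows "tileable T"
proof -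
  have onto: "f ` downs T = ups T"
    using assms card_image[OF f(1)] by (intro card_subset_eq) (auto simp: ups_def)
  have not_down: "f t \<notin> downs T" if "t \<in> downs T" for t
    using f(2) that by (auto simp: ups_def downs_def)
  define P where "P = (\<lambda>t. {f t, t}) ` downs T"
  have "lozenge_tiling P T"
    unfolding lozenge_tiling_def
  proof (intro conjI ballI impI)
    fix L assume "L \<in> P"
    then obtain t where t: "t \<in> downs T" "L = {f t, t}" unfolding P_def by blast
    then obtain w where "t = Down w" unfolding downs_def by blast
    then show "is_lozenge L" using t f(2) unfolding is_lozenge_iff by blast
    show "L \<subseteq> T" using t f(2) unfolding downs_def ups_def by blast
  next
    fix L L' assume "L \<in> P" "L' \<in> P" "L \<noteq> L'"
    then obtain t t' where "t \<in> downs T" "t' \<in> downs T" "L = {f t, t}" "L' = {f t', t'}" "t \<noteq> t'"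
      unfolding P_def by blast
    then show "L \<inter> L' = {}" using f(1) not_down by (auto dest: inj_onD)
  next
    show "\<Union>P = T" using onto ups_Un_downs[of T] unfolding P_def by auto
  qed
  then show ?thesis unfolding tileable_def by blast
qed

section \<open>Monomial subregions inside the board\<close>

definition touches_sides :: "monom \<Rightarrow> tri set \<Rightarrow> bool" where
  "touches_sides m T \<longleftrightarrow> (\<forall>i<3. \<exists>u. Up u \<in> T \<and> coord i u = coord i m)"

text \<open>Embedding of the monomial subregion at m into the board of side 2 (d - deg m) - 1: an
  upward triangle becomes the cell at twice its (x, z)-offset from m, a downward one the cell
  above it, together with a corner cell linking it to its x-neighbour. Board adjacency then
  contains the edge graph of the triangles, and the sides x = x(m), z = z(m), y = y(m) of the
  subregion go to the sides of the board.\<close>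

definition up_cell :: "monom \<Rightarrow> monom \<Rightarrow> nat \<times> nat" where
  "up_cell m u = (2 * (coord 0 u - coord 0 m), 2 * (coord 2 u - coord 2 m))"

definition down_cell :: "monom \<Rightarrow> monom \<Rightarrow> nat \<times> nat" where
  "down_cell m w = (2 * (coord 0 w - coord 0 m), Suc (2 * (coord 2 w - coord 2 m)))"

definition corner_cell :: "monom \<Rightarrow> monom \<Rightarrow> nat \<times> nat" where
  "corner_cell m w = (Suc (2 * (coord 0 w - coord 0 m)), 2 * (coord 2 w - coord 2 m))"

definition tri_cell :: "monom \<Rightarrow> tri \<Rightarrow> nat \<times> nat" where
  "tri_cell m t = (case t of Up u \<Rightarrow> up_cell m u | Down w \<Rightarrow> down_cell m w)"

definition board_image :: "monom \<Rightarrow> tri set \<Rightarrow> (nat \<times> nat) set" where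
  "board_image m T = tri_cell m ` T \<union>
     corner_cell m ` {w. Down w \<in> T \<and> Up (madd w (unit_vec 0)) \<in> T}"

lemma tri_cell_simps [simp]: "tri_cell m (Up u) = up_cell m u" "tri_cell m (Down w) = down_cell m w"
  by (simp_all add: tri_cell_def)

lemma offset_inj:
  assumes "mdvd m u" "mdvd m u'" "mdeg u = mdeg u'"
    and "coord 0 u - coord 0 m = coord 0 u' - coord 0 m" "coord 2 u - coord 2 m = coord 2 u' - coord 2 m"
  shows "u = u'"
  using assms by (cases m; cases u; cases u') auto

lemma up_cell_neq_down_cell: "up_cell m u \<noteq> down_cell m w"
  unfolding up_cell_def down_cell_def by simp presburger

lemma corner_cell_neq_tri_cell: "corner_cell m w \<noteq> tri_cell m t"
  unfolding corner_cell_def tri_cell_def up_cell_def down_cell_def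
  by (cases t) (simp, presburger)+

lemma up_cell_inj:
  "mdvd m u \<Longrightarrow> mdvd m u' \<Longrightarrow> mdeg u = mdeg u' \<Longrightarrow> up_cell m u = up_cell m u' \<Longrightarrow> u = u'"
  by (rule offset_inj) (auto simp: up_cell_def)

lemma down_cell_inj:
  "mdvd m w \<Longrightarrow> mdvd m w' \<Longrightarrow> mdeg w = mdeg w' \<Longrightarrow> down_cell m w = down_cell m w' \<Longrightarrow> w = w'"
  by (rule offset_inj) (auto simp: down_cell_def)

lemma corner_cell_inj:
  "mdvd m w \<Longrightarrow> mdvd m w' \<Longrightarrow> mdeg w = mdeg w' \<Longrightarrow> corner_cell m w = corner_cell m w' \<Longrightarrow> w = w'"
  by (rule offset_inj) (auto simp: corner_cell_def)

lemma tri_cell_inj: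
  assumes "s \<in> monomial_subregion (triangle d) m" "t \<in> monomial_subregion (triangle d) m"
    and "tri_cell m s = tri_cell m t"
  shows "s = t"
  using assms up_cell_neq_down_cell[of m] up_cell_neq_down_cell[of m, symmetric]
  by (cases s; cases t)
     (auto simp: tri_cell_def Up_in_triangle_subregion Down_in_triangle_subregion dest: up_cell_inj down_cell_inj)

lemma up_cell_in_board: "mdeg u + 1 = d \<Longrightarrow> mdvd m u \<Longrightarrow> up_cell m u \<in> board (2 * (d - mdeg m) - 1)"
  by (cases m; cases u) (simp add: board_def up_cell_def; arith)

lemma down_cell_in_board: "mdeg w + 2 = d \<Longrightarrow> mdvd m w \<Longrightarrow> down_cell m w \<in> board (2 * (d - mdeg m) - 1)"
  by (cases m; cases w) (simp add: board_def down_cell_def; arith)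

lemma corner_cell_in_board: "mdeg w + 2 = d \<Longrightarrow> mdvd m w \<Longrightarrow> corner_cell m w \<in> board (2 * (d - mdeg m) - 1)"
  by (cases m; cases w) (simp add: board_def corner_cell_def; arith)

lemma board_image_subset_board:
  assumes "T \<subseteq> monomial_subregion (triangle d) m"
  shows "board_image m T \<subseteq> board (2 * (d - mdeg m) - 1)"
proof -
  have "tri_cell m t \<in> board (2 * (d - mdeg m) - 1)" if "t \<in> T" for t
  proof (cases t)
    case (Up u)
    then have "mdeg u + 1 = d" "mdvd m u" using assms that by (auto simp only: Up_in_triangle_subregion)
    then show ?thesis unfolding Up tri_cell_def tri.case by (rule up_cell_in_board)
  next
    case (Down w)
    then have "mdeg w + 2 = d" "mdvd m w" using assms that by (auto simp only: Down_in_triangle_subregion)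
    then show ?thesis unfolding Down tri_cell_def tri.case by (rule down_cell_in_board)
  qed
  moreover have "corner_cell m w \<in> board (2 * (d - mdeg m) - 1)" if "Down w \<in> T" for w
  proof -
    have "mdeg w + 2 = d" "mdvd m w" using assms that by (auto simp only: Down_in_triangle_subregion)
    then show ?thesis by (rule corner_cell_in_board)
  qed
  ultimately show ?thesis unfolding board_image_def by blast
qed

lemma board_images_intersect:
  assumes T: "T \<subseteq> monomial_subregion (triangle d) m" and T': "T' \<subseteq> monomial_subregion (triangle d) m"
    and "board_image m T \<inter> board_image m T' \<noteq> {}"
  shows "T \<inter> T' \<noteq> {}"
proof -
  obtain p where p: "p \<in> board_image m T" "p \<in> board_image m T'" using assms(3) by blast
  have T_cases: "(\<exists>s\<in>T. p = tri_cell m s) \<or> (\<exists>w. Down w \<in> T \<and> p = corner_cell m w)"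
    and T'_cases: "(\<exists>s\<in>T'. p = tri_cell m s) \<or> (\<exists>w. Down w \<in> T' \<and> p = corner_cell m w)"
    using p unfolding board_image_def by blast+
  then consider (tri) s s' where "s \<in> T" "s' \<in> T'" "tri_cell m s = tri_cell m s'"
    | (corner) w w' where "Down w \<in> T" "Down w' \<in> T'" "corner_cell m w = corner_cell m w'"
    using corner_cell_neq_tri_cell by metis
  then show ?thesis
  proof cases
    case tri
    then show ?thesis using tri_cell_inj T T' by blast
  next
    case corner
    have "mdeg w + 2 = d" "mdvd m w" "mdeg w' + 2 = d" "mdvd m w'"
      using corner(1,2) T T' by (auto simp only: Down_in_triangle_subregion)
    then have "w = w'" using corner(3) corner_cell_inj by auto
    then show ?thesis using corner(1,2) by blast
  qed
qed

lemma hex_adj_cells: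
  assumes "mdvd m w"
  shows "hex_adj (down_cell m w) (corner_cell m w)"
    "hex_adj (corner_cell m w) (up_cell m (madd w (unit_vec 0)))"
    "hex_adj (down_cell m w) (up_cell m (madd w (unit_vec 1)))"
    "hex_adj (down_cell m w) (up_cell m (madd w (unit_vec 2)))"
  using assms
  by (cases m; cases w; simp add: hex_adj_def down_cell_def corner_cell_def up_cell_def unit_vec_def;
      arith)+

definition board_step :: "monom \<Rightarrow> tri set \<Rightarrow> nat \<times> nat \<Rightarrow> nat \<times> nat \<Rightarrow> bool" where
  "board_step m T p q \<longleftrightarrow> p \<in> board_image m T \<and> q \<in> board_image m T \<and> hex_adj p q"

lemma symp_board_step: "symp (board_step m T)"
  using symp_hex_adj unfolding board_step_def symp_def by blast

lemma tri_cell_in_board_image: "t \<in> T \<Longrightarrow> tri_cell m t \<in> board_image m T"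
  unfolding board_image_def by blast

lemma board_path_down_up:
  assumes "Down w \<in> T" "Up u \<in> T" "adjacent u w" "mdvd m w"
  shows "(board_step m T)\<^sup>*\<^sup>* (down_cell m w) (up_cell m u)"
proof -
  have cells: "down_cell m w \<in> board_image m T" "up_cell m u \<in> board_image m T"
    using tri_cell_in_board_image[OF assms(1), of m] tri_cell_in_board_image[OF assms(2), of m] by simp_all
  note adj = hex_adj_cells[OF \<open>mdvd m w\<close>]
  consider "u = madd w (unit_vec 0)" | "u = madd w (unit_vec 1)" | "u = madd w (unit_vec 2)"
    using \<open>adjacent u w\<close> unfolding adjacent_cases by blast
  then show ?thesis
  proof cases
    case 1
    then have "corner_cell m w \<in> board_image m T" using assms(1,2) unfolding board_image_def by blast
    then have "board_step m T (down_cell m w) (corner_cell m w)" "board_step m T (corner_cell m w) (up_cell m u)"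
      using cells adj(1,2) 1 unfolding board_step_def by simp_all
    then show ?thesis by (meson r_into_rtranclp rtranclp.rtrancl_into_rtrancl)
  next
    case 2
    then show ?thesis using cells adj(3) unfolding board_step_def by (simp add: r_into_rtranclp)
  next
    case 3
    then show ?thesis using cells adj(4) unfolding board_step_def by (simp add: r_into_rtranclp)
  qed
qed

lemma board_path_of_tri_edge:
  assumes T: "T \<subseteq> monomial_subregion (triangle d) m" and "s \<in> T" "t \<in> T" "tri_edge s t"
  shows "(board_step m T)\<^sup>*\<^sup>* (tri_cell m s) (tri_cell m t)"
proof -
  obtain u w where uw: "adjacent u w" "s = Up u \<and> t = Down w \<or> s = Down w \<and> t = Up u"
    using \<open>tri_edge s t\<close> unfolding tri_edge_def by blast
  then have "mdvd m w" using assms(2,3) T Down_in_triangle_subregion by blast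
  then have path: "(board_step m T)\<^sup>*\<^sup>* (down_cell m w) (up_cell m u)"
    using board_path_down_up uw assms(2,3) by blast
  then have "(board_step m T)\<^sup>*\<^sup>* (up_cell m u) (down_cell m w)"
    by (rule sympD[OF symp_rtranclp[OF symp_board_step]])
  then show ?thesis using path uw(2) by auto
qed

lemma connected_board_image:
  assumes T: "T \<subseteq> monomial_subregion (triangle d) m" and conn: "connected_in tri_edge T"
  shows "connected_in hex_adj (board_image m T)"
proof (cases "T = {}")
  case False
  then obtain t0 where "t0 \<in> T" by blast
  have tri_reach: "(board_step m T)\<^sup>*\<^sup>* (tri_cell m t0) (tri_cell m t)" if "t \<in> T" for t
  proof -
    have "(\<lambda>x y. x \<in> T \<and> y \<in> T \<and> tri_edge x y)\<^sup>*\<^sup>* t0 t"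
      using conn \<open>t0 \<in> T\<close> that unfolding connected_in_def by blast
    then show ?thesis
      by (induction rule: rtranclp_induct) (auto intro: rtranclp_trans board_path_of_tri_edge[OF T])
  qed
  have "(board_step m T)\<^sup>*\<^sup>* (tri_cell m t0) p" if p: "p \<in> board_image m T" for p
  proof -
    consider "p \<in> tri_cell m ` T" | w where "Down w \<in> T" "p = corner_cell m w"
      using p unfolding board_image_def by blast
    then show ?thesis
    proof cases
      case 2
      have "mdvd m w" using 2(1) T Down_in_triangle_subregion by blast
      moreover have "down_cell m w \<in> board_image m T"
        using tri_cell_in_board_image[OF 2(1), of m] by simp
      ultimately have "board_step m T (tri_cell m (Down w)) p"
        using 2 p hex_adj_cells(1) unfolding board_step_def by simp
      with tri_reach[OF 2(1)] show ?thesis by (rule rtranclp.rtrancl_into_rtrancl)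
    qed (use tri_reach in blast)
  qed
  then show ?thesis using connected_in_from_base[OF symp_hex_adj] unfolding board_step_def by blast
qed (simp add: connected_in_def board_image_def)

lemma up_cell_on_hypotenuse:
  "mdeg u + 1 = d \<Longrightarrow> mdvd m u \<Longrightarrow> coord 1 u = coord 1 m \<Longrightarrow>
    fst (up_cell m u) + snd (up_cell m u) + 1 = 2 * (d - mdeg m) - 1"
proof -
  assume "mdeg u + 1 = d" "mdvd m u" "coord 1 u = coord 1 m"
  moreover obtain a0 b0 c0 a b c where "m = (a0, b0, c0)" "u = (a, b, c)" by (cases m, cases u)
  ultimately have "d - mdeg m = (a - a0) + (c - c0) + 1" by (auto simp: coord_def)
  then show ?thesis using \<open>m = (a0, b0, c0)\<close> \<open>u = (a, b, c)\<close> by (simp add: up_cell_def)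
qed

lemma board_image_touches_sides:
  assumes T: "T \<subseteq> monomial_subregion (triangle d) m" and "touches_sides m T"
  shows "\<exists>p\<in>board_image m T. fst p = 0" "\<exists>p\<in>board_image m T. snd p = 0"
    "\<exists>p\<in>board_image m T. fst p + snd p + 1 = 2 * (d - mdeg m) - 1"
proof -
  have up_in: "up_cell m u \<in> board_image m T" if "Up u \<in> T" for u
  proof -
    have "tri_cell m (Up u) \<in> board_image m T" using that unfolding board_image_def by blast
    then show ?thesis by simp
  qed
  have side: "\<exists>u. Up u \<in> T \<and> coord i u = coord i m" if "i < 3" for i
    using assms(2) that unfolding touches_sides_def by blast
  have "(0::nat) < 3" "(1::nat) < 3" "(2::nat) < 3" by simp_all
  then obtain u0 u1 u2 where u: "Up u0 \<in> T" "coord 0 u0 = coord 0 m" "Up u1 \<in> T" "coord 1 u1 = coord 1 m"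
    "Up u2 \<in> T" "coord 2 u2 = coord 2 m"
    using side by meson
  show "\<exists>p\<in>board_image m T. fst p = 0"
    using up_in[OF u(1)] u(2) unfolding up_cell_def by (intro bexI) simp_all
  show "\<exists>p\<in>board_image m T. snd p = 0"
    using up_in[OF u(5)] u(6) unfolding up_cell_def by (intro bexI) simp_all
  have "mdeg u1 + 1 = d" "mdvd m u1" using u(3) T Up_in_triangle_subregion by blast+
  then show "\<exists>p\<in>board_image m T. fst p + snd p + 1 = 2 * (d - mdeg m) - 1"
    using up_in[OF u(3)] up_cell_on_hypotenuse[OF _ _ u(4)] by blast
qed

lemma spans_sides_board_image:
  assumes "T \<subseteq> monomial_subregion (triangle d) m" "connected_in tri_edge T" "touches_sides m T"
  shows "spans_sides (2 * (d - mdeg m) - 1) (board_image m T)"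
  unfolding spans_sides_def
  using board_image_subset_board[OF assms(1)] connected_board_image[OF assms(1,2)]
    board_image_touches_sides[OF assms(1,3)]
  by (intro conjI)

theorem spanning_subregions_intersect:
  assumes "T \<subseteq> monomial_subregion (triangle d) m" "T' \<subseteq> monomial_subregion (triangle d) m"
    and "connected_in tri_edge T" "connected_in tri_edge T'"
    and "touches_sides m T" "touches_sides m T'"
  shows "T \<inter> T' \<noteq> {}"
proof -
  have "board_image m T \<inter> board_image m T' \<noteq> {}"
    using spans_sides_board_image assms by (intro spanning_sets_intersect)
  then show ?thesis by (rule board_images_intersect[OF assms(1,2)])
qed

section \<open>Hall's condition\<close>

lemma touches_sides_mono: "touches_sides m T \<Longrightarrow> T \<subseteq> T' \<Longrightarrow> touches_sides m T'"
  unfolding touches_sides_def by blast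

lemma touches_sides_closure_downs:
  assumes "A \<subseteq> downs (monomial_subregion (triangle d) m)"
    and sides: "\<forall>i<3. \<exists>w. Down w \<in> A \<and> coord i w = coord i m"
  shows "touches_sides m (A \<union> {c \<in> monomial_subregion (triangle d) m. \<exists>a\<in>A. tri_edge a c})"
  unfolding touches_sides_def
proof (intro allI impI)
  fix i :: nat assume "i < 3"
  then obtain w where w: "Down w \<in> A" "coord i w = coord i m" using sides by blast
  \<comment> \<open>Any upward neighbour of w along a direction other than i lies on the same side.\<close>
  define u where "u = madd w (unit_vec (if i = 0 then 1 else 0))"
  have "adjacent u w" unfolding u_def adjacent_def by (intro exI[of _ "if i = 0 then 1 else 0"]) simp
  moreover have "Down w \<in> monomial_subregion (triangle d) m" using w(1) assms(1) unfolding downs_def by blast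
  then have "mdeg w + 2 = d" "mdvd m w" unfolding Down_in_triangle_subregion by blast+
  ultimately have "Up u \<in> monomial_subregion (triangle d) m"
    unfolding Up_in_triangle_subregion using adjacent_mdeg_mdvd[of u w] mdvd_trans[of m w u] by simp
  moreover have "tri_edge (Down w) (Up u)" using \<open>adjacent u w\<close> by (simp add: tri_edge_Down)
  moreover have "coord i u = coord i m" using w(2) by (simp add: u_def coord_madd_other_unit_vec)
  ultimately show "\<exists>u. Up u \<in> A \<union> {c \<in> monomial_subregion (triangle d) m. \<exists>a\<in>A. tri_edge a c} \<and>
      coord i u = coord i m"
    using w(1) by blast
qed

lemma closures_disjoint:
  assumes "A \<subseteq> downs U" "B \<subseteq> ups U'" and no_edge: "\<forall>a\<in>A. \<forall>b\<in>B. \<not> tri_edge a b"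
  shows "(A \<union> {c\<in>S. \<exists>a\<in>A. tri_edge a c}) \<inter> (B \<union> {c\<in>S. \<exists>b\<in>B. tri_edge b c}) = {}"
proof (rule ccontr)
  assume "\<not> ?thesis"
  then obtain t where t: "t \<in> A \<or> (\<exists>a\<in>A. tri_edge a t)" "t \<in> B \<or> (\<exists>b\<in>B. tri_edge b t)" by blast
  have up: "\<exists>u. t = Up u" if "t \<in> B \<or> (\<exists>a\<in>A. tri_edge a t)"
    using that assms(1,2) unfolding downs_def ups_def tri_edge_def by blast
  have down: "\<exists>w. t = Down w" if "t \<in> A \<or> (\<exists>b\<in>B. tri_edge b t)"
    using that assms(1,2) unfolding downs_def ups_def tri_edge_def by blast
  from t show False
  proof (elim disjE)
    assume "t \<in> A" "\<exists>b\<in>B. tri_edge b t"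
    then show False using no_edge symp_tri_edge by (blast dest: sympD)
  next
    assume "\<exists>a\<in>A. tri_edge a t" "t \<in> B"
    then show False using no_edge by blast
  qed (use up down in force)+
qed

lemma neighbours_Down_subregion:
  assumes "Down w \<in> monomial_subregion T m"
  shows "neighbours tri_edge T (Down w) \<subseteq> ups (monomial_subregion T m)"
proof
  fix s assume "s \<in> neighbours tri_edge T (Down w)"
  then obtain u where u: "s = Up u" "s \<in> T" "adjacent u w" unfolding neighbours_def tri_edge_Down by blast
  have "mdvd m w" using assms unfolding monomial_subregion_def tri_label_def by simp
  then have "mdvd m u" using adjacent_mdeg_mdvd[OF u(3)] mdvd_trans by blast
  then show "s \<in> ups (monomial_subregion T m)"
    using u(1,2) unfolding ups_def monomial_subregion_def tri_label_def by (simp del: split_paired_Ex)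
qed

lemma lower_neighbour_in_subregion:
  assumes "monomial_ideal I" "Up u \<in> monomial_subregion (Td d I) m" "coord i m < coord i u"
  shows "Down (mlower i u) \<in> neighbours tri_edge (monomial_subregion (Td d I) m) (Up u)"
proof -
  have u: "mdeg u + 1 = d" "u \<notin> I" "mdvd m u" using assms(2) unfolding Up_in_subregion_Td by blast+
  note low = mlower_properties[OF assms(3) u(3)]
  have "mlower i u \<notin> I" using monomial_ideal_mdvd_closed[OF assms(1) u(2) low(2)] .
  then have "Down (mlower i u) \<in> monomial_subregion (Td d I) m"
    using low u(1) unfolding Down_in_subregion_Td by simp
  then show ?thesis using low(1) unfolding neighbours_def by (simp add: tri_edge_Up del: split_paired_Ex)
qed

lemma deficient_ups_touch_sides:
  assumes ideal: "monomial_ideal I" and B: "B \<subseteq> ups (monomial_subregion (Td d I) m)"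
    and deficient: "card (\<Union>(neighbours tri_edge (monomial_subregion (Td d I) m) ` B)) < card B"
  shows "touches_sides m B"
  unfolding touches_sides_def
proof (intro allI impI, rule ccontr)
  define R where "R = monomial_subregion (Td d I) m"
  fix i :: nat assume "i < 3" and off_side: "\<not> (\<exists>u. Up u \<in> B \<and> coord i u = coord i m)"
  \<comment> \<open>Then lowering the i-th exponent matches B injectively into its own neighbourhood.\<close>
  have up: "\<exists>u. t = Up u \<and> Up u \<in> R \<and> coord i m < coord i u" if t: "t \<in> B" for t
  proof -
    obtain u where u: "t = Up u" "Up u \<in> R" using B t unfolding ups_def R_def by blast
    then have "mdvd m u" unfolding R_def Up_in_subregion_Td by blast
    moreover have "coord i u \<noteq> coord i m" using off_side t u(1) by blast
    ultimately show ?thesis using u mdvd_coord_le[of m u i] by auto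
  qed
  define g where "g t = Down (mlower i (tri_label t))" for t
  have "inj_on g B"
  proof (rule inj_onI)
    fix t t' assume t: "t \<in> B" "t' \<in> B" "g t = g t'"
    obtain u u' where "t = Up u" "t' = Up u'" "coord i m < coord i u" "coord i m < coord i u'"
      using up[OF t(1)] up[OF t(2)] by blast
    moreover from this have "mlower i u = mlower i u'" using t(3) by (simp add: g_def)
    ultimately show "t = t'" using mlower_inj by blast
  qed
  moreover have "g ` B \<subseteq> \<Union>(neighbours tri_edge R ` B)"
    using up lower_neighbour_in_subregion[OF ideal] unfolding g_def R_def by fastforce
  moreover have "finite (\<Union>(neighbours tri_edge R ` B))"
    by (rule finite_subset[OF _ finite_Td_subregion[of d I m]]) (auto simp: R_def neighbours_def)
  ultimately have "card B \<le> card (\<Union>(neighbours tri_edge R ` B))" by (rule card_inj_on_le)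
  then show False using deficient unfolding R_def by simp
qed

lemma deficient_downs_give_deficient_ups:
  assumes A: "A \<subseteq> downs (monomial_subregion T m)" and "finite T"
    and deficient: "card (\<Union>(neighbours tri_edge T ` A)) < card A"
    and not_heavy: "\<not> down_heavy (monomial_subregion T m)"
  obtains B where "B \<subseteq> ups (monomial_subregion T m)"
    "card (\<Union>(neighbours tri_edge (monomial_subregion T m) ` B)) < card B"
    "\<forall>a\<in>A. \<forall>b\<in>B. \<not> tri_edge a b"
proof
  define R where "R = monomial_subregion T m"
  define NA where "NA = \<Union>(neighbours tri_edge T ` A)"
  have "R \<subseteq> T" unfolding R_def monomial_subregion_def by blast
  have no_edge: "\<not> tri_edge a b" if "a \<in> A" "b \<in> ups R - NA" for a b
    using that \<open>R \<subseteq> T\<close> unfolding NA_def neighbours_def ups_def by blast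
  then show "\<forall>a\<in>A. \<forall>b\<in>ups R - NA. \<not> tri_edge a b" by blast
  show "ups R - NA \<subseteq> ups (monomial_subregion T m)" unfolding R_def by blast
  have "NA \<subseteq> ups R"
    using A neighbours_Down_subregion unfolding NA_def R_def downs_def by blast
  moreover have "\<Union>(neighbours tri_edge R ` (ups R - NA)) \<subseteq> downs R - A"
  proof
    fix s assume "s \<in> \<Union>(neighbours tri_edge R ` (ups R - NA))"
    then obtain b where b: "b \<in> ups R - NA" "s \<in> R" "tri_edge b s" unfolding neighbours_def by blast
    then have "\<exists>w. s = Down w" unfolding ups_def tri_edge_def using tri.distinct(1) by blast
    moreover have "s \<notin> A" using no_edge b symp_tri_edge by (blast dest: sympD)
    ultimately show "s \<in> downs R - A" using b(2) unfolding downs_def by blast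
  qed
  moreover have "finite R" using \<open>finite T\<close> \<open>R \<subseteq> T\<close> finite_subset by blast
  ultimately show "card (\<Union>(neighbours tri_edge (monomial_subregion T m) ` (ups R - NA))) < card (ups R - NA)"
    using card_deficient_complement[of "ups R" "downs R" A NA] A deficient not_heavy
    unfolding R_def NA_def down_heavy_def ups_def downs_def by (simp add: not_less)
qed

lemma opposite_minimal_deficient_sets:
  assumes ideal: "monomial_ideal I"
    and A: "A \<subseteq> downs (monomial_subregion (Td d I) m)" "finite A"
      "\<forall>i<3. \<exists>w. Down w \<in> A \<and> coord i w = coord i m"
      "card (\<Union>(neighbours tri_edge (Td d I) ` A)) < card A"
      "\<forall>A'. A' \<subset> A \<longrightarrow> card A' \<le> card (\<Union>(neighbours tri_edge (Td d I) ` A'))"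
    and B: "B \<subseteq> ups (monomial_subregion (Td d I) m)"
      "card (\<Union>(neighbours tri_edge (monomial_subregion (Td d I) m) ` B)) < card B"
      "\<forall>B'. B' \<subset> B \<longrightarrow> card B' \<le> card (\<Union>(neighbours tri_edge (monomial_subregion (Td d I) m) ` B'))"
    and no_edge: "\<forall>a\<in>A. \<forall>b\<in>B. \<not> tri_edge a b"
  shows False
proof -
  define S where "S = monomial_subregion (triangle d) m"
  define R where "R = monomial_subregion (Td d I) m"
  define TA where "TA = A \<union> {c\<in>S. \<exists>a\<in>A. tri_edge a c}"
  define TB where "TB = B \<union> {c\<in>S. \<exists>b\<in>B. tri_edge b c}"
  have "R \<subseteq> S" unfolding R_def S_def by (rule monomial_subregion_mono[OF Td_subset_triangle])
  have "finite (Td d I)" by (rule finite_subset[OF Td_subset_triangle finite_triangle])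
  have "finite R" unfolding R_def by (rule finite_Td_subregion)
  have "finite B" using B(1) \<open>finite R\<close> unfolding R_def ups_def by (simp add: finite_subset)
  have "A \<subseteq> downs S" using A(1) \<open>R \<subseteq> S\<close> unfolding R_def downs_def by blast
  have "\<forall>a\<in>A. neighbours tri_edge (Td d I) a \<subseteq> S"
    using A(1) neighbours_Down_subregion \<open>R \<subseteq> S\<close> unfolding R_def ups_def downs_def by blast
  then have "connected_in tri_edge TA"
    unfolding TA_def using \<open>finite (Td d I)\<close> finite_neighbours
    by (intro connected_closure_of_minimal_deficient[OF symp_tri_edge A(2) _ A(4,5)]) auto
  moreover have "connected_in tri_edge TB"
    unfolding TB_def using \<open>finite R\<close> \<open>R \<subseteq> S\<close> finite_neighbours
    by (intro connected_closure_of_minimal_deficient[OF symp_tri_edge \<open>finite B\<close> _ B(2,3)[folded R_def]])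
      (auto simp: neighbours_def)
  moreover have "touches_sides m TA"
    unfolding TA_def S_def by (rule touches_sides_closure_downs[OF \<open>A \<subseteq> downs S\<close>[unfolded S_def] A(3)])
  moreover have "touches_sides m TB"
    unfolding TB_def by (rule touches_sides_mono[OF deficient_ups_touch_sides[OF ideal B(1,2)]]) blast
  moreover have "TA \<subseteq> S" "TB \<subseteq> S"
    using \<open>A \<subseteq> downs S\<close> B(1) \<open>R \<subseteq> S\<close> unfolding TA_def TB_def R_def downs_def ups_def by blast+
  ultimately have "TA \<inter> TB \<noteq> {}" unfolding S_def by (intro spanning_subregions_intersect)
  then show False using closures_disjoint[OF A(1) B(1) no_edge] unfolding TA_def TB_def by blast
qed

lemma downs_in_gcd_subregion:
  assumes "A \<subseteq> downs T" "finite A" "A \<noteq> {}"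
  shows "A \<subseteq> downs (monomial_subregion T (mgcd (tri_label ` A)))"
    and "\<exists>w. Down w \<in> A \<and> coord i w = coord i (mgcd (tri_label ` A))"
proof -
  show "A \<subseteq> downs (monomial_subregion T (mgcd (tri_label ` A)))"
    using assms(1) mgcd_mdvd[OF finite_imageI[OF assms(2)]]
    unfolding downs_def monomial_subregion_def by blast
  obtain a where "a \<in> A" "coord i (tri_label a) = coord i (mgcd (tri_label ` A))"
    using mgcd_attained[of "tri_label ` A" i] assms(2,3) by auto
  moreover obtain w where "a = Down w" using \<open>a \<in> A\<close> assms(1) unfolding downs_def by blast
  ultimately have "Down w \<in> A" "coord i w = coord i (mgcd (tri_label ` A))" by simp_all
  then show "\<exists>w. Down w \<in> A \<and> coord i w = coord i (mgcd (tri_label ` A))" by blast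
qed

lemma hall_condition:
  assumes ideal: "monomial_ideal I"
    and not_heavy: "\<forall>m. mdeg m < d \<longrightarrow> \<not> down_heavy (monomial_subregion (Td d I) m)"
    and A0: "A0 \<subseteq> downs (Td d I)"
  shows "card A0 \<le> card (\<Union>(neighbours tri_edge (Td d I) ` A0))"
proof (rule ccontr)
  define N where "N = neighbours tri_edge (Td d I)"
  have "finite (Td d I)" by (rule finite_subset[OF Td_subset_triangle finite_triangle])
  then have "finite A0" using A0 unfolding downs_def by (simp add: finite_subset)
  assume "\<not> ?thesis"
  then have "card (\<Union>(N ` A0)) < card A0" unfolding N_def by simp
  then obtain A where A: "A \<subseteq> A0" "card (\<Union>(N ` A)) < card A"
    "\<forall>A'. A' \<subset> A \<longrightarrow> card A' \<le> card (\<Union>(N ` A'))"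
    using exists_minimal_deficient_subset[OF \<open>finite A0\<close>] by blast
  have "finite A" "A \<noteq> {}" "A \<subseteq> downs (Td d I)"
    using A(1,2) A0 \<open>finite A0\<close> finite_subset by auto
  \<comment> \<open>The smallest monomial subregion containing A.\<close>
  define m where "m = mgcd (tri_label ` A)"
  note A_m = downs_in_gcd_subregion(1)[OF \<open>A \<subseteq> downs (Td d I)\<close> \<open>finite A\<close> \<open>A \<noteq> {}\<close>, folded m_def]
  note attained = downs_in_gcd_subregion(2)[OF \<open>A \<subseteq> downs (Td d I)\<close> \<open>finite A\<close> \<open>A \<noteq> {}\<close>, folded m_def]
  then have sides: "\<forall>i<3. \<exists>w. Down w \<in> A \<and> coord i w = coord i m" by blast
  obtain w where "Down w \<in> A" using attained[of 0] by blast
  then have "Down w \<in> monomial_subregion (Td d I) m" using A_m by auto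
  then have "mdeg w + 2 = d" "mdvd m w" unfolding Down_in_subregion_Td by blast+
  then have "mdeg m < d" using mdeg_le_if_mdvd by fastforce
  then obtain B where B: "B \<subseteq> ups (monomial_subregion (Td d I) m)"
    "card (\<Union>(neighbours tri_edge (monomial_subregion (Td d I) m) ` B)) < card B"
    "\<forall>a\<in>A. \<forall>b\<in>B. \<not> tri_edge a b"
    using deficient_downs_give_deficient_ups[OF A_m \<open>finite (Td d I)\<close> A(2)[unfolded N_def]] not_heavy
    by blast
  have "finite B" using B(1) finite_Td_subregion[of d I m] unfolding ups_def by (simp add: finite_subset)
  then obtain B0 where "B0 \<subseteq> B"
    "card (\<Union>(neighbours tri_edge (monomial_subregion (Td d I) m) ` B0)) < card B0"
    "\<forall>B'. B' \<subset> B0 \<longrightarrow> card B' \<le> card (\<Union>(neighbours tri_edge (monomial_subregion (Td d I) m) ` B'))"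
    using exists_minimal_deficient_subset[OF _ B(2)] by blast
  moreover have "B0 \<subseteq> ups (monomial_subregion (Td d I) m)" "\<forall>a\<in>A. \<forall>b\<in>B0. \<not> tri_edge a b"
    using \<open>B0 \<subseteq> B\<close> B(1,3) by blast+
  ultimately show False
    using opposite_minimal_deficient_sets[OF ideal A_m \<open>finite A\<close> sides A(2,3)[unfolded N_def]] by blast
qed

theorem theorem2p2:
  fixes I :: "monom set" and d :: nat
  assumes "d \<ge> 1"
    and "monomial_ideal I"
    and "balanced (Td d I)"
  shows "tileable (Td d I) \<longleftrightarrow>
           (\<forall>m. mdeg m < d \<longrightarrow> \<not> down_heavy (monomial_subregion (Td d I) m))"
proof
  have finite: "finite (Td d I)" by (rule finite_subset[OF Td_subset_triangle finite_triangle])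
  show "tileable (Td d I) \<Longrightarrow> \<forall>m. mdeg m < d \<longrightarrow> \<not> down_heavy (monomial_subregion (Td d I) m)"
    using tiling_not_down_heavy[OF finite] unfolding tileable_def by blast
  assume not_heavy: "\<forall>m. mdeg m < d \<longrightarrow> \<not> down_heavy (monomial_subregion (Td d I) m)"
  have "\<exists>f. inj_on f (downs (Td d I)) \<and> (\<forall>t\<in>downs (Td d I). f t \<in> neighbours tri_edge (Td d I) t)"
  proof (rule hall_marriage)
    show "finite (downs (Td d I))" using finite unfolding downs_def by simp
    show "\<forall>t\<in>downs (Td d I). finite (neighbours tri_edge (Td d I) t)"
      using finite_neighbours[OF finite] by blast
    show "\<forall>A\<subseteq>downs (Td d I). card A \<le> card (\<Union>(neighbours tri_edge (Td d I) ` A))"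
      using hall_condition[OF assms(2) not_heavy] by blast
  qed
  then show "tileable (Td d I)"
    using tileable_if_matching[OF finite] assms(3) neighbours_of_down unfolding balanced_def by metis
qed

end
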